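(* Let $\Bbbk$ be a field of characteristic zero, $S=\Bbbk[x_1,\ldots,x_5]$, $d\geq 5$, and $I=(x_1^d,\dots , x_5^d,x_1^{\lceil d/2\rceil}x_2^{\lfloor d/2\rfloor})$. Then $S/I$ fails the WLP in degree $t=\lfloor (5d-5)/2\rfloor-1$.
   Context: For a monomial ideal $I$, $A=S/I$ fails the WLP in degree $i$ if $\times(x_1+\cdots+x_5): A_i\to A_{i+1}$ is neither injective nor surjective. *)

theory Defs
  imports Main "HOL-Library.Poly_Mapping" "HOL-Library.Numeral_Type"
begin

text \<open>Polynomial ring S = k[x_1,...,x_5]: finitely supported maps from monomials
  (exponent vectors indexed by the 5-element type 5) to coefficients.\<close>
type_synonym 'k poly5 = "(5 \<Rightarrow>\<^sub>0 nat) \<Rightarrow>\<^sub>0 'k"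

definition var :: "5 \<Rightarrow> 'k::comm_ring_1 poly5" where
  "var j = Poly_Mapping.single (Poly_Mapping.single j 1) 1"

definition mdeg :: "(5 \<Rightarrow>\<^sub>0 nat) \<Rightarrow> nat" where
  "mdeg m = (\<Sum>j\<in>UNIV. Poly_Mapping.lookup m j)"

definition homogeneous :: "'k::comm_ring_1 poly5 \<Rightarrow> nat \<Rightarrow> bool" where
  "homogeneous f i \<longleftrightarrow> (\<forall>m\<in>Poly_Mapping.keys f. mdeg m = i)"

definition ideal_gen :: "'k::comm_ring_1 poly5 set \<Rightarrow> 'k poly5 set" where
  "ideal_gen G = {\<Sum>g\<in>F. q g * g | F q. finite F \<and> F \<subseteq> G}"

definition lin_form :: "'k::comm_ring_1 poly5" where
  "lin_form = (\<Sum>j\<in>UNIV. var j)"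

text \<open>Multiplication by the linear form A_i -> A_{i+1}, A = S/I, on graded pieces.\<close>
definition mult_L_injective :: "'k::comm_ring_1 poly5 set \<Rightarrow> nat \<Rightarrow> bool" where
  "mult_L_injective I i \<longleftrightarrow>
     (\<forall>f. homogeneous f i \<longrightarrow> lin_form * f \<in> I \<longrightarrow> f \<in> I)"

definition mult_L_surjective :: "'k::comm_ring_1 poly5 set \<Rightarrow> nat \<Rightarrow> bool" where
  "mult_L_surjective I i \<longleftrightarrow>
     (\<forall>g. homogeneous g (Suc i) \<longrightarrow>
        (\<exists>f h. homogeneous f i \<and> h \<in> I \<and> g = lin_form * f + h))"

definition fails_WLP_in_degree :: "'k::comm_ring_1 poly5 set \<Rightarrow> nat \<Rightarrow> bool" where
  "fails_WLP_in_degree I i \<longleftrightarrow> \<not> mult_L_injective I i \<and> \<not> mult_L_surjective I i"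

text \<open>I = (x_1^d,...,x_5^d, x_1^{ceil(d/2)} x_2^{floor(d/2)}); x_1, x_2 are var 0, var 1.\<close>
definition the_ideal :: "nat \<Rightarrow> 'k::comm_ring_1 poly5 set" where
  "the_ideal d = ideal_gen ({var j ^ d | j. True} \<union>
      {var 0 ^ ((d + 1) div 2) * var 1 ^ (d div 2)})"

end

theory Submission
  imports Defs
begin

(*
  Variables are indexed from 0 in the code: x_(i+1) is var i. Let t be the degree in
  question and L = x_1 + ... + x_5.

  Surjectivity fails by apolarity. Under the pairing <p, Phi> = sum_mu mu! p_mu Phi_mu,
  multiplication by L is adjoint to D = d/dx_1 + ... + d/dx_5. The form
  Phi = (x_1 - x_2)^(d-1) V^((d-1) div 2) (x_3 - x_4)^((d-1) mod 2), with V the Vandermonde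
  product of x_3, x_4, x_5, has degree t + 1, is killed by D, and has no monomial in I.
  So <-, Phi> vanishes on L S_t + I but not on the monomials of Phi.

  Injectivity fails: let s = x_1 + x_2 + x_3, y = x_4 + x_5 and n = 2d - 1. Since n is odd,
  L (sum_(j<n) (-s)^(n-1-j) y^j) = y^n + s^n, and y^n lies in I. At most two monomials in
  x_1, x_2, x_3 of degree n + h, h = (d-1) div 2 - 1, lie outside I, so a nonzero
  w = c_1 x_1^h + c_2 x_2^h + c_3 x_3^h with s^n w in I exists. Then f = (sum ...) w has
  L f in I, but its coefficient at x_4^(d-1) x_5^(d-1) x_i^h, a monomial outside I, is
  binom(2d-2, d-1) c_i, which is nonzero for suitable i.
*)

abbreviation lookup :: "('a \<Rightarrow>\<^sub>0 'b::zero) \<Rightarrow> 'a \<Rightarrow> 'b" where "lookup \<equiv> Poly_Mapping.lookup"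
abbreviation keys :: "('a \<Rightarrow>\<^sub>0 'b::zero) \<Rightarrow> 'a set" where "keys \<equiv> Poly_Mapping.keys"
abbreviation single :: "'a \<Rightarrow> 'b \<Rightarrow> ('a \<Rightarrow>\<^sub>0 'b::zero)" where "single \<equiv> Poly_Mapping.single"

definition partial_deg :: "'n set \<Rightarrow> ('n \<Rightarrow>\<^sub>0 nat) \<Rightarrow> nat" where
  "partial_deg J \<mu> = (\<Sum>j\<in>J. lookup \<mu> j)"

definition homogeneous_in :: "'n set \<Rightarrow> (('n \<Rightarrow>\<^sub>0 nat) \<Rightarrow>\<^sub>0 'k::zero) \<Rightarrow> nat \<Rightarrow> bool" where
  "homogeneous_in J p c \<longleftrightarrow> (\<forall>\<mu>\<in>keys p. partial_deg J \<mu> = c)"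

definition degree_in_le :: "'n set \<Rightarrow> (('n \<Rightarrow>\<^sub>0 nat) \<Rightarrow>\<^sub>0 'k::zero) \<Rightarrow> nat \<Rightarrow> bool" where
  "degree_in_le J p c \<longleftrightarrow> (\<forall>\<mu>\<in>keys p. partial_deg J \<mu> \<le> c)"

lemma partial_deg_add [simp]: "partial_deg J (\<alpha> + \<beta>) = partial_deg J \<alpha> + partial_deg J \<beta>"
  by (simp add: partial_deg_def lookup_add sum.distrib)

lemma partial_deg_zero [simp]: "partial_deg J 0 = 0"
  by (simp add: partial_deg_def)

lemma partial_deg_single [simp]:
  "partial_deg J (single j n) = (if j \<in> J then n else 0)" if "finite J"
  using that by (simp add: partial_deg_def lookup_single when_def)

lemma partial_deg_pair: "a \<noteq> b \<Longrightarrow> partial_deg {a, b} \<mu> = lookup \<mu> a + lookup \<mu> b"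
  by (simp add: partial_deg_def)

lemma mdeg_eq_partial_deg: "mdeg = partial_deg UNIV"
  by (simp add: fun_eq_iff mdeg_def partial_deg_def)

lemma homogeneous_iff_homogeneous_in: "homogeneous f i \<longleftrightarrow> homogeneous_in UNIV f i"
  by (simp add: homogeneous_def homogeneous_in_def mdeg_eq_partial_deg)

lemma homogeneous_in_single: "homogeneous_in J (single \<mu> c) (partial_deg J \<mu>)"
  by (simp add: homogeneous_in_def)

lemma homogeneous_in_zero: "homogeneous_in J 0 c"
  by (simp add: homogeneous_in_def)

lemma homogeneous_in_one: "homogeneous_in J 1 0"
  by (simp add: homogeneous_in_def)

lemma homogeneous_in_add:
  "homogeneous_in J p c \<Longrightarrow> homogeneous_in J q c \<Longrightarrow> homogeneous_in J (p + q) c"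
  using keys_add[of p q] by (auto simp: homogeneous_in_def)

lemma homogeneous_in_diff:
  "homogeneous_in J p c \<Longrightarrow> homogeneous_in J q c \<Longrightarrow> homogeneous_in J (p - q) c"
  using keys_diff[of p q] by (auto simp: homogeneous_in_def)

lemma homogeneous_in_uminus: "homogeneous_in J p c \<Longrightarrow> homogeneous_in J (- p) c"
  by (simp add: homogeneous_in_def)

lemma homogeneous_in_sum:
  "(\<And>a. a \<in> A \<Longrightarrow> homogeneous_in J (f a) c) \<Longrightarrow> homogeneous_in J (sum f A) c"
  by (induction A rule: infinite_finite_induct) (auto intro: homogeneous_in_zero homogeneous_in_add)

lemma homogeneous_in_mult:
  fixes p q :: "('n \<Rightarrow>\<^sub>0 nat) \<Rightarrow>\<^sub>0 'k::comm_semiring_0"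
  shows "homogeneous_in J p a \<Longrightarrow> homogeneous_in J q b \<Longrightarrow> homogeneous_in J (p * q) (a + b)"
  using keys_mult[of p q] by (fastforce simp: homogeneous_in_def)

lemma homogeneous_in_power:
  fixes p :: "('n \<Rightarrow>\<^sub>0 nat) \<Rightarrow>\<^sub>0 'k::comm_semiring_1"
  shows "homogeneous_in J p a \<Longrightarrow> homogeneous_in J (p ^ n) (n * a)"
  by (induction n) (simp_all add: homogeneous_in_one homogeneous_in_mult)

lemma degree_in_le_mono: "degree_in_le J p a \<Longrightarrow> a \<le> b \<Longrightarrow> degree_in_le J p b"
  by (auto simp: degree_in_le_def)

lemma homogeneous_in_imp_degree_in_le: "homogeneous_in J p a \<Longrightarrow> degree_in_le J p a"
  by (simp add: homogeneous_in_def degree_in_le_def)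

lemma degree_in_le_diff:
  "degree_in_le J p c \<Longrightarrow> degree_in_le J q c \<Longrightarrow> degree_in_le J (p - q) c"
  using keys_diff[of p q] by (auto simp: degree_in_le_def)

lemma degree_in_le_mult:
  fixes p q :: "('n \<Rightarrow>\<^sub>0 nat) \<Rightarrow>\<^sub>0 'k::comm_semiring_0"
  shows "degree_in_le J p a \<Longrightarrow> degree_in_le J q b \<Longrightarrow> degree_in_le J (p * q) (a + b)"
  using keys_mult[of p q] by (fastforce simp: degree_in_le_def intro: add_mono)

lemma degree_in_le_power:
  fixes p :: "('n \<Rightarrow>\<^sub>0 nat) \<Rightarrow>\<^sub>0 'k::comm_semiring_1"
  shows "degree_in_le J p a \<Longrightarrow> degree_in_le J (p ^ n) (n * a)"
  by (induction n) (simp add: degree_in_le_def, simp add: degree_in_le_mult)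

lemma poly_mapping_sum_single: "(\<Sum>\<mu>\<in>keys p. single \<mu> (lookup p \<mu>)) = p"
  by (rule poly_mapping_eqI) (simp add: lookup_sum lookup_single when_def in_keys_iff)

lemma lookup_mult_single_add:
  fixes p :: "'a::cancel_comm_monoid_add \<Rightarrow>\<^sub>0 'k::comm_semiring_1"
  shows "lookup (p * single \<nu> c) (\<gamma> + \<nu>) = lookup p \<gamma> * c"
proof -
  have "(\<Sum>\<alpha>. lookup p \<alpha> * (\<Sum>\<beta>. c when \<nu> = \<beta> \<and> \<gamma> + \<nu> = \<alpha> + \<beta>))
      = (\<Sum>\<alpha>. lookup p \<alpha> * c when \<alpha> = \<gamma>)"
  proof (rule Sum_any.cong)
    fix \<alpha>
    have "(c when \<nu> = \<beta> \<and> \<gamma> + \<nu> = \<alpha> + \<beta>) = ((c when \<alpha> = \<gamma>) when \<beta> = \<nu>)" for \<beta>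
      by (auto simp: when_def)
    then have "(\<Sum>\<beta>. c when \<nu> = \<beta> \<and> \<gamma> + \<nu> = \<alpha> + \<beta>) = (c when \<alpha> = \<gamma>)"
      by simp
    then show "lookup p \<alpha> * (\<Sum>\<beta>. c when \<nu> = \<beta> \<and> \<gamma> + \<nu> = \<alpha> + \<beta>) = (lookup p \<alpha> * c when \<alpha> = \<gamma>)"
      by (simp add: mult_when)
  qed
  then show ?thesis
    by (simp add: lookup_mult lookup_single when_when conj_commute)
qed

lemma lookup_mult_single_eq_0:
  fixes p :: "'a::monoid_add \<Rightarrow>\<^sub>0 'k::comm_semiring_1"
  assumes "\<And>\<gamma>. \<mu> \<noteq> \<gamma> + \<nu>"
  shows "lookup (p * single \<nu> c) \<mu> = 0"
proof -
  have "\<mu> \<notin> keys (p * single \<nu> c)"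
    using keys_mult[of p "single \<nu> c"] assms by (auto split: if_splits)
  then show ?thesis by (simp add: in_keys_iff)
qed

lemma lookup_mult_single_scale:
  fixes p :: "'a::cancel_comm_monoid_add \<Rightarrow>\<^sub>0 'k::comm_semiring_1"
  shows "lookup (p * single \<nu> c) \<mu> = lookup (p * single \<nu> 1) \<mu> * c"
proof -
  have "p * single \<nu> c = (p * single \<nu> 1) * single 0 c"
    by (simp add: mult.assoc mult_single)
  then show ?thesis
    using lookup_mult_single_add[of "p * single \<nu> 1" 0 c \<mu>] by simp
qed

lemma exhaust_5:
  fixes j :: 5
  shows "j = 0 \<or> j = 1 \<or> j = 2 \<or> j = 3 \<or> j = 4"
proof (induct j)
  case (of_int z)
  then have "z = 0 \<or> z = 1 \<or> z = 2 \<or> z = 3 \<or> z = 4" by fastforce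
  then show ?case by auto
qed

lemma UNIV_5: "(UNIV :: 5 set) = {0, 1, 2, 3, 4}"
  using exhaust_5 by auto

lemma distinct_5: "distinct [0, 1, 2, 3, 4::5]"
  by simp

lemma sum_UNIV_5: "(\<Sum>j\<in>UNIV. f j) = f 0 + f 1 + f 2 + f 3 + f (4::5)"
proof -
  have "(\<Sum>j\<in>UNIV. f j) = sum_list (map f [0, 1, 2, 3, 4])"
    using distinct_5 by (simp only: UNIV_5 flip: sum.distinct_set_conv_list) simp
  then show ?thesis by (simp add: add.assoc)
qed

lemma sum_012: "(\<Sum>i\<in>{0, 1, 2 :: 5}. f i) = f 0 + f 1 + f 2"
proof -
  have "distinct [0, 1, 2 :: 5]"
    using distinct_5 by simp
  from sum.distinct_set_conv_list[OF this, of f] show ?thesis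
    by (simp add: add.assoc)
qed

lemma var_power: "(var j :: 'k::comm_ring_1 poly5) ^ n = single (single j n) 1"
  by (induction n) (simp_all add: var_def mult_single single_add[symmetric] add.commute)

lemma var_eq_var_iff: "(var a :: 'k::comm_ring_1 poly5) = var b \<longleftrightarrow> a = b"
proof
  assume "(var a :: 'k poly5) = var b"
  then have "lookup (var a :: 'k poly5) (single b 1) = lookup (var b :: 'k poly5) (single b 1)"
    by (rule arg_cong)
  then have "lookup (single (single a (1::nat)) (1::'k)) (single b 1) = 1"
    unfolding var_def lookup_single_eq .
  then show "a = b"
    by (metis lookup_single_eq lookup_single_not_eq zero_neq_one)
qed simp

lemma lin_form_eq_sum_monomials: "lin_form = (\<Sum>j\<in>UNIV. single (single j 1) 1)"
  by (simp add: lin_form_def var_def)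

lemma homogeneous_in_var: "homogeneous_in J (var j) (if j \<in> J then 1 else 0)"
proof -
  have deg: "partial_deg J (single j (1::nat)) = (if j \<in> J then 1 else 0)"
    by (rule partial_deg_single) simp
  show ?thesis
    using homogeneous_in_single[of J "single j (1::nat)" 1] unfolding var_def deg .
qed

lemma homogeneous_in_var_mem: "j \<in> J \<Longrightarrow> homogeneous_in J (var j) 1"
  using homogeneous_in_var[of J j] by simp

lemma homogeneous_in_var_not_mem: "j \<notin> J \<Longrightarrow> homogeneous_in J (var j) 0"
  using homogeneous_in_var[of J j] by simp

lemma homogeneous_in_var_diff:
  assumes "a \<in> J \<longleftrightarrow> b \<in> J"
  shows "homogeneous_in J (var a - var b) (if a \<in> J then 1 else 0)"
  using homogeneous_in_diff[OF homogeneous_in_var[of J a] homogeneous_in_var[of J b, folded assms]] .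

lemma degree_in_le_var_diff: "degree_in_le J (var a - var b) (if a \<in> J \<or> b \<in> J then 1 else 0)"
proof (rule degree_in_le_diff)
  show "degree_in_le J (var a) (if a \<in> J \<or> b \<in> J then 1 else 0)"
    using homogeneous_in_imp_degree_in_le[OF homogeneous_in_var[of J a]] by (rule degree_in_le_mono) simp
  show "degree_in_le J (var b) (if a \<in> J \<or> b \<in> J then 1 else 0)"
    using homogeneous_in_imp_degree_in_le[OF homogeneous_in_var[of J b]] by (rule degree_in_le_mono) simp
qed

section \<open>Monomial ideals\<close>

lemma in_ideal_gen_monomials_iff:
  fixes p :: "'k::comm_ring_1 poly5"
  shows "p \<in> ideal_gen ((\<lambda>\<nu>. single \<nu> 1) ` M) \<longleftrightarrow>
    (\<forall>\<mu>\<in>keys p. \<exists>\<nu>\<in>M. \<exists>\<gamma>. \<mu> = \<gamma> + \<nu>)"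
    (is "p \<in> ideal_gen (?mon ` M) \<longleftrightarrow> _")
proof
  assume "p \<in> ideal_gen (?mon ` M)"
  then obtain F q where p: "p = (\<Sum>g\<in>F. q g * g)" and F: "F \<subseteq> ?mon ` M"
    unfolding ideal_gen_def by blast
  show "\<forall>\<mu>\<in>keys p. \<exists>\<nu>\<in>M. \<exists>\<gamma>. \<mu> = \<gamma> + \<nu>"
  proof
    fix \<mu> assume "\<mu> \<in> keys p"
    then obtain g where g: "g \<in> F" "\<mu> \<in> keys (q g * g)"
      using p keys_sum[of "\<lambda>g. q g * g" F] by blast
    then obtain \<nu> where \<nu>: "\<nu> \<in> M" "g = ?mon \<nu>" using F by blast
    have "\<mu> \<in> {\<alpha> + \<beta> | \<alpha> \<beta>. \<alpha> \<in> keys (q g) \<and> \<beta> \<in> keys g}"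
      using g(2) keys_mult by blast
    then show "\<exists>\<nu>\<in>M. \<exists>\<gamma>. \<mu> = \<gamma> + \<nu>" using \<nu> by auto
  qed
next
  assume "\<forall>\<mu>\<in>keys p. \<exists>\<nu>\<in>M. \<exists>\<gamma>. \<mu> = \<gamma> + \<nu>"
  then obtain \<nu> \<gamma> where \<nu>: "\<And>\<mu>. \<mu> \<in> keys p \<Longrightarrow> \<nu> \<mu> \<in> M"
    and \<gamma>: "\<And>\<mu>. \<mu> \<in> keys p \<Longrightarrow> \<gamma> \<mu> + \<nu> \<mu> = \<mu>"
    by metis
  define S where "S = keys p"
  define t where "t \<mu> = single (\<gamma> \<mu>) (lookup p \<mu>)" for \<mu>
  define q where "q g = (\<Sum>\<mu>\<in>{\<mu>\<in>S. ?mon (\<nu> \<mu>) = g}. t \<mu>)" for g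
  have "p = (\<Sum>\<mu>\<in>S. single \<mu> (lookup p \<mu>))"
    by (simp add: S_def poly_mapping_sum_single)
  also have "\<dots> = (\<Sum>\<mu>\<in>S. t \<mu> * ?mon (\<nu> \<mu>))"
    by (rule sum.cong) (simp_all add: S_def t_def mult_single \<gamma>)
  also have "\<dots> = (\<Sum>g\<in>?mon ` \<nu> ` S. \<Sum>\<mu>\<in>{\<mu>\<in>S. ?mon (\<nu> \<mu>) = g}. t \<mu> * ?mon (\<nu> \<mu>))"
    by (rule sum.group[symmetric]) (auto simp: S_def)
  also have "\<dots> = (\<Sum>g\<in>?mon ` \<nu> ` S. q g * g)"
    by (auto simp: q_def sum_distrib_right intro!: sum.cong)
  finally have "p = (\<Sum>g\<in>?mon ` \<nu> ` S. q g * g)" .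
  moreover have "finite (?mon ` \<nu> ` S)" "?mon ` \<nu> ` S \<subseteq> ?mon ` M"
    using \<nu> by (auto simp: S_def)
  ultimately show "p \<in> ideal_gen (?mon ` M)"
    unfolding ideal_gen_def by blast
qed

lemma exists_add_eq_iff_lookup_le:
  "(\<exists>\<gamma>. \<mu> = \<gamma> + \<nu>) \<longleftrightarrow> (\<forall>j. lookup \<nu> j \<le> lookup (\<mu> :: 'n \<Rightarrow>\<^sub>0 nat) j)"
proof
  assume "\<forall>j. lookup \<nu> j \<le> lookup \<mu> j"
  then have "\<mu> = (\<mu> - \<nu>) + \<nu>" by (intro poly_mapping_eqI) (simp add: lookup_add lookup_minus)
  then show "\<exists>\<gamma>. \<mu> = \<gamma> + \<nu>" ..
qed (auto simp: lookup_add)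

definition monomial_in_ideal :: "nat \<Rightarrow> (5 \<Rightarrow>\<^sub>0 nat) \<Rightarrow> bool" where
  "monomial_in_ideal d \<mu> \<longleftrightarrow>
     (\<exists>j. d \<le> lookup \<mu> j) \<or>
     ((d + 1) div 2 \<le> lookup \<mu> 0 \<and> d div 2 \<le> lookup \<mu> 1)"

lemma monomial_in_ideal_add_left: "monomial_in_ideal d \<alpha> \<Longrightarrow> monomial_in_ideal d (\<alpha> + \<beta>)"
  unfolding monomial_in_ideal_def by (auto simp: lookup_add intro: trans_le_add1)

lemma the_ideal_monomial_generators:
  "the_ideal d = ideal_gen ((\<lambda>\<nu>. single \<nu> 1) `
     (range (\<lambda>j. single j d) \<union>
      {single 0 ((d + 1) div 2) + single 1 (d div 2)}))"
proof -
  have pure_powers: "{var j ^ d | j. True} = (\<lambda>\<nu>. single \<nu> 1) ` range (\<lambda>j. single j d)"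
    by (auto simp: var_power)
  have mixed: "var 0 ^ ((d + 1) div 2) * var 1 ^ (d div 2) =
      single (single 0 ((d + 1) div 2) + single 1 (d div 2)) 1"
    by (simp add: var_power mult_single)
  show ?thesis
    unfolding the_ideal_def pure_powers mixed by simp
qed

lemma divisible_by_generator_iff:
  "(\<exists>\<nu>\<in>range (\<lambda>j. single j d) \<union>
      {single 0 ((d + 1) div 2) + single 1 (d div 2)}.
     \<forall>j. lookup \<nu> j \<le> lookup \<mu> j) \<longleftrightarrow> monomial_in_ideal d \<mu>"
proof -
  have "(\<forall>i. lookup (single j d) i \<le> lookup \<mu> i)
      \<longleftrightarrow> d \<le> lookup \<mu> j" for j
    by (auto simp: lookup_single when_def)
  moreover have "(\<forall>i. lookup (single 0 ((d + 1) div 2)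
                     + single (1::5) (d div 2)) i \<le> lookup \<mu> i)
      \<longleftrightarrow> (d + 1) div 2 \<le> lookup \<mu> 0 \<and> d div 2 \<le> lookup \<mu> 1"
    (is "(\<forall>i. ?le i) \<longleftrightarrow> _")
  proof
    assume "\<forall>i. ?le i"
    from this[rule_format, of 0] this[rule_format, of 1]
    show "(d + 1) div 2 \<le> lookup \<mu> 0 \<and> d div 2 \<le> lookup \<mu> 1"
      by (simp add: lookup_add lookup_single)
  qed (auto simp: lookup_add lookup_single when_def)
  ultimately show ?thesis
    unfolding monomial_in_ideal_def by blast
qed

lemma in_the_ideal_iff:
  "p \<in> the_ideal d \<longleftrightarrow> (\<forall>\<mu>\<in>keys p. monomial_in_ideal d \<mu>)"
  unfolding the_ideal_monomial_generators in_ideal_gen_monomials_iff exists_add_eq_iff_lookup_le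
    divisible_by_generator_iff ..

lemma the_ideal_add: "p \<in> the_ideal d \<Longrightarrow> q \<in> the_ideal d \<Longrightarrow> p + q \<in> the_ideal d"
  using keys_add[of p q] by (auto simp: in_the_ideal_iff)

lemma not_monomial_in_ideal:
  assumes "lookup \<mu> 0 + lookup \<mu> 1 < d" and "\<And>j. j \<in> {2, 3, 4} \<Longrightarrow> lookup \<mu> j < d"
  shows "\<not> monomial_in_ideal d \<mu>"
proof -
  have "lookup \<mu> j < d" for j
    using exhaust_5[of j] assms by auto
  then show ?thesis
    using assms(1) by (auto simp: monomial_in_ideal_def not_le)
qed

section \<open>Apolarity\<close>

definition sum_partials :: "(('n::finite \<Rightarrow>\<^sub>0 nat) \<Rightarrow>\<^sub>0 'k::comm_ring_1) \<Rightarrow> ('n \<Rightarrow>\<^sub>0 nat) \<Rightarrow>\<^sub>0 'k" where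
  "sum_partials p = Abs_poly_mapping (\<lambda>\<nu>. \<Sum>i\<in>UNIV. of_nat (lookup \<nu> i + 1) * lookup p (\<nu> + single i 1))"

lemma lookup_sum_partials:
  "lookup (sum_partials p) \<nu> = (\<Sum>i\<in>UNIV. of_nat (lookup \<nu> i + 1) * lookup p (\<nu> + single i 1))"
proof -
  have "{\<nu>. (\<Sum>i\<in>UNIV. of_nat (lookup \<nu> i + 1) * lookup p (\<nu> + single i 1)) \<noteq> 0}
      \<subseteq> (\<Union>i. (\<lambda>\<mu>. \<mu> - single i 1) ` keys p)"
  proof
    fix \<nu> assume "\<nu> \<in> {\<nu>. (\<Sum>i\<in>UNIV. of_nat (lookup \<nu> i + 1) * lookup p (\<nu> + single i 1)) \<noteq> 0}"
    then obtain i where "lookup p (\<nu> + single i 1) \<noteq> 0"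
      by (metis (mono_tags, lifting) mem_Collect_eq mult_zero_right sum.neutral)
    then have "\<nu> + single i 1 \<in> keys p" by (simp add: in_keys_iff)
    moreover have "\<nu> = (\<nu> + single i 1) - single i 1" by simp
    ultimately show "\<nu> \<in> (\<Union>i. (\<lambda>\<mu>. \<mu> - single i 1) ` keys p)" by blast
  qed
  then have "finite {\<nu>. (\<Sum>i\<in>UNIV. of_nat (lookup \<nu> i + 1) * lookup p (\<nu> + single i 1)) \<noteq> 0}"
    by (rule finite_subset) simp
  then show ?thesis by (simp add: sum_partials_def)
qed

lemma sum_partials_add: "sum_partials (p + q) = sum_partials p + sum_partials q"
  by (rule poly_mapping_eqI) (simp add: lookup_sum_partials lookup_add distrib_left sum.distrib)

lemma sum_partials_diff: "sum_partials (p - q) = sum_partials p - sum_partials q"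
  by (rule poly_mapping_eqI) (simp add: lookup_sum_partials lookup_minus right_diff_distrib sum_subtractf)

lemma sum_partials_zero: "sum_partials 0 = 0"
  by (rule poly_mapping_eqI) (simp add: lookup_sum_partials)

lemma sum_partials_sum: "sum_partials (sum f A) = (\<Sum>a\<in>A. sum_partials (f a))"
  by (induction A rule: infinite_finite_induct) (simp_all add: sum_partials_zero sum_partials_add)

lemma diff_unit_add_unit:
  "lookup \<mu> i \<noteq> 0 \<Longrightarrow> \<mu> - single i 1 + single i 1 = (\<mu> :: 'n \<Rightarrow>\<^sub>0 nat)"
  by (rule poly_mapping_eqI) (auto simp: lookup_add lookup_minus lookup_single when_def)

lemma sum_partials_single:
  "sum_partials (single \<mu> c) = (\<Sum>i\<in>UNIV. single (\<mu> - single i 1) (of_nat (lookup \<mu> i) * c))"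
proof (rule poly_mapping_eqI)
  fix \<nu>
  have "of_nat (lookup \<nu> i + 1) * (c when \<mu> = \<nu> + single i 1)
      = (of_nat (lookup \<mu> i) * c when \<mu> - single i 1 = \<nu>)" for i
  proof (cases "\<mu> - single i 1 = \<nu> \<and> lookup \<mu> i \<noteq> 0")
    case True
    then have "\<mu> = \<nu> + single i 1"
      using diff_unit_add_unit[of \<mu> i] by metis
    then show ?thesis by (simp add: lookup_add)
  next
    case False
    then have "\<mu> \<noteq> \<nu> + single i 1" by (auto simp: lookup_add)
    then show ?thesis using False by auto
  qed
  then show "lookup (sum_partials (single \<mu> c)) \<nu>
      = lookup (\<Sum>i\<in>UNIV. single (\<mu> - single i 1) (of_nat (lookup \<mu> i) * c)) \<nu>"
    by (simp add: lookup_sum_partials lookup_sum lookup_single)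
qed

lemma single_diff_unit_mult:
  "single (\<mu> - single i 1) (of_nat (lookup \<mu> i) * a) * single \<nu> b
     = single (\<mu> + \<nu> - single i 1) (of_nat (lookup \<mu> i) * (a * b :: 'k::comm_ring_1))"
proof (cases "lookup \<mu> i = 0")
  case False
  then have "\<mu> - single i 1 + \<nu> = \<mu> + \<nu> - single i 1"
    by (auto simp: poly_mapping_eq_iff fun_eq_iff lookup_add lookup_minus lookup_single when_def)
  then show ?thesis by (simp add: mult_single mult.assoc)
qed simp

lemma sum_partials_mult_single:
  fixes a b :: "'k::comm_ring_1"
  shows "sum_partials (single \<mu> a * single \<nu> b)
    = sum_partials (single \<mu> a) * single \<nu> b + single \<mu> a * sum_partials (single \<nu> b)"
proof -
  have split: "single (\<mu> + \<nu> - single i 1) (of_nat (lookup (\<mu> + \<nu>) i) * (a * b))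
      = single (\<mu> - single i 1) (of_nat (lookup \<mu> i) * a) * single \<nu> b
        + single \<mu> a * single (\<nu> - single i 1) (of_nat (lookup \<nu> i) * b)" for i
  proof -
    have "single \<mu> a * single (\<nu> - single i 1) (of_nat (lookup \<nu> i) * b)
        = single (\<nu> + \<mu> - single i 1) (of_nat (lookup \<nu> i) * (b * a))"
      by (simp only: mult.commute[of "single \<mu> a"] single_diff_unit_mult)
    then show ?thesis
      using single_diff_unit_mult[of \<mu> i a \<nu> b]
      by (simp add: lookup_add distrib_right single_add add.commute[of \<nu> \<mu>] mult.commute[of b a])
  qed
  show ?thesis
    by (simp only: mult_single sum_partials_single split sum.distrib
        sum_distrib_left sum_distrib_right)
qed

lemma sum_partials_mult:
  "sum_partials (p * q) = sum_partials p * q + p * sum_partials (q :: ('n::finite \<Rightarrow>\<^sub>0 nat) \<Rightarrow>\<^sub>0 'k::comm_ring_1)"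
proof -
  let ?P = "\<lambda>\<mu>. single \<mu> (lookup p \<mu>)" and ?Q = "\<lambda>\<nu>. single \<nu> (lookup q \<nu>)"
  have "sum_partials (p * q) = sum_partials ((\<Sum>\<mu>\<in>keys p. ?P \<mu>) * (\<Sum>\<nu>\<in>keys q. ?Q \<nu>))"
    by (simp only: poly_mapping_sum_single)
  also have "\<dots> = (\<Sum>\<mu>\<in>keys p. \<Sum>\<nu>\<in>keys q. sum_partials (?P \<mu>) * ?Q \<nu> + ?P \<mu> * sum_partials (?Q \<nu>))"
    by (simp only: sum_product sum_partials_sum sum_partials_mult_single)
  also have "\<dots> = sum_partials p * q + p * sum_partials q"
    by (simp only: sum.distrib sum_product[symmetric] sum_partials_sum[symmetric] poly_mapping_sum_single)
  finally show ?thesis .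
qed

lemma sum_partials_one: "sum_partials 1 = 0"
  by (simp add: sum_partials_single flip: single_one)

lemma sum_partials_linear_monomial:
  "sum_partials (single (single (j::'n::finite) 1) 1) = (1 :: ('n \<Rightarrow>\<^sub>0 nat) \<Rightarrow>\<^sub>0 'k::comm_ring_1)"
proof -
  have "sum_partials (single (single j 1) (1::'k))
      = (\<Sum>i\<in>UNIV. if i = j then 1 else (0 :: ('n::finite \<Rightarrow>\<^sub>0 nat) \<Rightarrow>\<^sub>0 'k))"
    unfolding sum_partials_single by (rule sum.cong) (auto simp: lookup_single)
  then show ?thesis by simp
qed

lemma sum_partials_mult_eq_0:
  "sum_partials p = 0 \<Longrightarrow> sum_partials q = 0 \<Longrightarrow> sum_partials (p * q) = 0"
  by (simp add: sum_partials_mult)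

lemma sum_partials_power_eq_0: "sum_partials p = 0 \<Longrightarrow> sum_partials (p ^ n) = 0"
  by (induction n) (simp_all add: sum_partials_one sum_partials_mult_eq_0)

lemma sum_partials_var_diff: "sum_partials (var a - var b) = 0"
  unfolding var_def sum_partials_diff sum_partials_linear_monomial by simp

definition monomial_fact :: "('n::finite \<Rightarrow>\<^sub>0 nat) \<Rightarrow> 'k::comm_semiring_1" where
  "monomial_fact \<mu> = (\<Prod>j\<in>UNIV. of_nat (fact (lookup \<mu> j)))"

lemma monomial_fact_add_unit:
  "monomial_fact (\<nu> + single i 1) = of_nat (lookup \<nu> i + 1) * monomial_fact \<nu>"
proof -
  have "(of_nat (fact (lookup (\<nu> + single i 1) j)) :: 'a)
      = (if j = i then of_nat (lookup \<nu> i + 1) else 1) * of_nat (fact (lookup \<nu> j))" for j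
    by (simp add: lookup_add lookup_single algebra_simps)
  then show ?thesis
    unfolding monomial_fact_def by (simp add: prod.distrib)
qed

lemma monomial_fact_nonzero: "(monomial_fact \<mu> :: 'k::{comm_semiring_1, semiring_char_0}) \<noteq> 0"
  unfolding monomial_fact_def of_nat_prod[symmetric] of_nat_eq_0_iff by simp

definition apolar_pairing :: "(('n::finite \<Rightarrow>\<^sub>0 nat) \<Rightarrow>\<^sub>0 'k::comm_ring_1) \<Rightarrow> (('n \<Rightarrow>\<^sub>0 nat) \<Rightarrow>\<^sub>0 'k) \<Rightarrow> 'k" where
  "apolar_pairing p \<Phi> = (\<Sum>\<mu>\<in>keys \<Phi>. lookup p \<mu> * monomial_fact \<mu> * lookup \<Phi> \<mu>)"

lemma apolar_pairing_add: "apolar_pairing (p + q) \<Phi> = apolar_pairing p \<Phi> + apolar_pairing q \<Phi>"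
  by (simp add: apolar_pairing_def lookup_add distrib_right sum.distrib)

lemma apolar_pairing_zero: "apolar_pairing 0 \<Phi> = 0"
  by (simp add: apolar_pairing_def)

lemma apolar_pairing_sum: "apolar_pairing (sum f A) \<Phi> = (\<Sum>a\<in>A. apolar_pairing (f a) \<Phi>)"
  by (induction A rule: infinite_finite_induct) (simp_all add: apolar_pairing_zero apolar_pairing_add)

lemma apolar_pairing_single: "apolar_pairing (single \<mu> c) \<Phi> = c * monomial_fact \<mu> * lookup \<Phi> \<mu>"
proof -
  have "apolar_pairing (single \<mu> c) \<Phi> = (\<Sum>\<nu>\<in>keys \<Phi>. if \<nu> = \<mu> then c * monomial_fact \<mu> * lookup \<Phi> \<mu> else 0)"
    unfolding apolar_pairing_def by (rule sum.cong) (auto simp: lookup_single)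
  then show ?thesis by (simp add: in_keys_iff)
qed

lemma apolar_pairing_linear_form_mult:
  fixes p \<Phi> :: "('n::finite \<Rightarrow>\<^sub>0 nat) \<Rightarrow>\<^sub>0 'k::comm_ring_1"
  shows "apolar_pairing ((\<Sum>j\<in>UNIV. single (single j 1) 1) * p) \<Phi> = apolar_pairing p (sum_partials \<Phi>)"
proof -
  let ?L = "\<Sum>j\<in>UNIV. single (single j 1) 1 :: ('n \<Rightarrow>\<^sub>0 nat) \<Rightarrow>\<^sub>0 'k"
  have single_case: "apolar_pairing (?L * single \<nu> c) \<Phi> = apolar_pairing (single \<nu> c) (sum_partials \<Phi>)" for \<nu> c
  proof -
    have "apolar_pairing (?L * single \<nu> c) \<Phi> = (\<Sum>i\<in>UNIV. c * monomial_fact (\<nu> + single i 1) * lookup \<Phi> (\<nu> + single i 1))"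
      by (simp add: sum_distrib_right mult_single apolar_pairing_sum apolar_pairing_single add.commute)
    also have "\<dots> = (\<Sum>i\<in>UNIV. c * (of_nat (lookup \<nu> i + 1) * monomial_fact \<nu>) * lookup \<Phi> (\<nu> + single i 1))"
      by (simp only: monomial_fact_add_unit)
    also have "\<dots> = c * monomial_fact \<nu> * lookup (sum_partials \<Phi>) \<nu>"
      by (simp add: lookup_sum_partials sum_distrib_left mult_ac)
    finally show ?thesis by (simp add: apolar_pairing_single)
  qed
  have "apolar_pairing (?L * p) \<Phi> = apolar_pairing (?L * (\<Sum>\<mu>\<in>keys p. single \<mu> (lookup p \<mu>))) \<Phi>"
    by (simp only: poly_mapping_sum_single)
  also have "\<dots> = apolar_pairing (\<Sum>\<mu>\<in>keys p. single \<mu> (lookup p \<mu>)) (sum_partials \<Phi>)"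
    by (simp only: sum_distrib_left apolar_pairing_sum single_case)
  finally show ?thesis by (simp only: poly_mapping_sum_single)
qed

lemma not_mult_L_surjective_by_apolarity:
  fixes \<Phi> :: "'k::field_char_0 poly5" and I :: "'k poly5 set"
  assumes annihilated: "sum_partials \<Phi> = 0" and "\<Phi> \<noteq> 0" and hom: "homogeneous \<Phi> (Suc i)"
    and disjoint: "\<forall>h\<in>I. keys h \<inter> keys \<Phi> = {}"
  shows "\<not> mult_L_surjective I i"
proof
  assume "mult_L_surjective I i"
  obtain \<mu> where \<mu>: "\<mu> \<in> keys \<Phi>"
    using \<open>\<Phi> \<noteq> 0\<close> by (metis keys_eq_empty ex_in_conv)
  have "homogeneous (single \<mu> (1::'k)) (Suc i)"
    using hom \<mu> by (simp add: homogeneous_def)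
  with \<open>mult_L_surjective I i\<close> obtain f h where "h \<in> I" and decomp: "single \<mu> 1 = lin_form * f + h"
    unfolding mult_L_surjective_def by blast
  have "apolar_pairing h \<Phi> = 0"
    unfolding apolar_pairing_def
  proof (rule sum.neutral, rule ballI)
    fix \<nu> assume "\<nu> \<in> keys \<Phi>"
    then have "\<nu> \<notin> keys h" using disjoint \<open>h \<in> I\<close> by blast
    then show "lookup h \<nu> * monomial_fact \<nu> * lookup \<Phi> \<nu> = 0" by (simp add: in_keys_iff)
  qed
  moreover have "apolar_pairing (lin_form * f) \<Phi> = 0"
    unfolding lin_form_eq_sum_monomials apolar_pairing_linear_form_mult annihilated by (simp add: apolar_pairing_def)
  ultimately have "apolar_pairing (single \<mu> 1) \<Phi> = 0"
    by (simp add: decomp apolar_pairing_add)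
  then show False
    using \<mu> by (simp add: apolar_pairing_single in_keys_iff monomial_fact_nonzero)
qed

section \<open>Multiplication by the linear form is not surjective\<close>

definition vandermonde3 :: "'k::comm_ring_1 poly5" where
  "vandermonde3 = (var 2 - var 3) * (var 3 - var 4) * (var 4 - var 2)"

lemma homogeneous_in_vandermonde3:
  assumes "{2, 3, 4} \<subseteq> J \<or> {2, 3, 4} \<inter> J = {}"
  shows "homogeneous_in J (vandermonde3 :: 'k::comm_ring_1 poly5) (if 2 \<in> J then 3 else 0)"
proof -
  have "homogeneous_in J (vandermonde3 :: 'k poly5)
      ((if 2 \<in> J then 1 else 0) + (if 3 \<in> J then 1 else 0) + (if 4 \<in> J then 1 else 0))"
    unfolding vandermonde3_def using assms
    by (intro homogeneous_in_mult homogeneous_in_var_diff) auto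
  then show ?thesis using assms by (auto simp: numeral_eq_Suc)
qed

lemma degree_in_le_vandermonde3:
  assumes "j \<in> {2, 3, 4}"
  shows "degree_in_le {j} (vandermonde3 :: 'k::comm_ring_1 poly5) 2"
proof -
  have "degree_in_le {j} (vandermonde3 :: 'k poly5)
      ((if 2 \<in> {j} \<or> 3 \<in> {j} then 1 else 0) + (if 3 \<in> {j} \<or> 4 \<in> {j} then 1 else 0)
       + (if 4 \<in> {j} \<or> 2 \<in> {j} then 1 else 0))"
    unfolding vandermonde3_def by (intro degree_in_le_mult degree_in_le_var_diff)
  then show ?thesis using assms by (auto simp: numeral_eq_Suc)
qed

lemma five_pred_div_two_eq: "(5 * (d::nat) - 5) div 2 = 2 * (d - 1) + (d - 1) div 2"
proof -
  have "5 * d - 5 = 5 * (d - 1)" by (simp add: diff_mult_distrib2)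
  moreover have "5 * m div 2 = 2 * m + m div 2" for m :: nat
  proof (cases "even m")
    case True
    then obtain q where "m = 2 * q" by blast
    then show ?thesis by simp
  next
    case False
    then obtain q where "m = 2 * q + 1" by (blast elim: oddE)
    moreover have "5 * (2 * q + 1) div 2 = 5 * q + 2" by simp
    ultimately show ?thesis by simp
  qed
  ultimately show ?thesis by simp
qed

definition inverse_system_witness :: "nat \<Rightarrow> 'k::comm_ring_1 poly5" where
  "inverse_system_witness d = (var 0 - var 1) ^ (d - 1) * vandermonde3 ^ ((d - 1) div 2)
     * (var 2 - var 3) ^ ((d - 1) mod 2)"

lemma sum_partials_inverse_system_witness: "sum_partials (inverse_system_witness d) = 0"
  unfolding inverse_system_witness_def vandermonde3_def
  by (intro sum_partials_mult_eq_0 sum_partials_power_eq_0 sum_partials_var_diff)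

lemma inverse_system_witness_nonzero: "(inverse_system_witness d :: 'k::field poly5) \<noteq> 0"
  unfolding inverse_system_witness_def vandermonde3_def by (simp add: var_eq_var_iff)

lemma homogeneous_inverse_system_witness:
  assumes "1 \<le> d"
  shows "homogeneous (inverse_system_witness d :: 'k::comm_ring_1 poly5) ((5 * d - 5) div 2)"
proof -
  have "homogeneous_in UNIV (inverse_system_witness d :: 'k poly5)
      ((d - 1) * (if (0::5) \<in> UNIV then 1 else 0) + ((d - 1) div 2) * (if (2::5) \<in> UNIV then 3 else 0)
       + (d - 1) mod 2 * (if (2::5) \<in> UNIV then 1 else 0))"
    unfolding inverse_system_witness_def
    by (intro homogeneous_in_mult homogeneous_in_power homogeneous_in_vandermonde3
        homogeneous_in_var_diff) simp_all
  moreover have "(d - 1) + (d - 1) div 2 * 3 + (d - 1) mod 2 = (5 * d - 5) div 2"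
    using div_mult_mod_eq[of "d - 1" 2] five_pred_div_two_eq[of d] by linarith
  ultimately show ?thesis
    by (simp add: homogeneous_iff_homogeneous_in)
qed

lemma inverse_system_witness_keys_not_in_ideal:
  assumes "1 \<le> d" and "\<mu> \<in> keys (inverse_system_witness d :: 'k::comm_ring_1 poly5)"
  shows "\<not> monomial_in_ideal d \<mu>"
proof (rule not_monomial_in_ideal)
  have "homogeneous_in {0, 1} (inverse_system_witness d :: 'k poly5)
      ((d - 1) * (if 0 \<in> {0, 1::5} then 1 else 0) + ((d - 1) div 2) * (if 2 \<in> {0, 1::5} then 3 else 0)
       + (d - 1) mod 2 * (if 2 \<in> {0, 1::5} then 1 else 0))"
    unfolding inverse_system_witness_def
    by (intro homogeneous_in_mult homogeneous_in_power homogeneous_in_vandermonde3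
        homogeneous_in_var_diff) simp_all
  then show "lookup \<mu> 0 + lookup \<mu> 1 < d"
    using assms by (simp add: homogeneous_in_def partial_deg_def)
next
  fix j :: 5 assume j: "j \<in> {2, 3, 4}"
  have "degree_in_le {j} (inverse_system_witness d :: 'k poly5)
      ((d - 1) * (if 0 \<in> {j} \<or> 1 \<in> {j} then 1 else 0) + ((d - 1) div 2) * 2
       + (d - 1) mod 2 * (if 2 \<in> {j} \<or> 3 \<in> {j} then 1 else 0))"
    unfolding inverse_system_witness_def
    by (intro degree_in_le_mult degree_in_le_power degree_in_le_vandermonde3 degree_in_le_var_diff j)
  moreover have "(d - 1) * (if 0 \<in> {j} \<or> 1 \<in> {j} then 1 else 0) + ((d - 1) div 2) * 2
       + (d - 1) mod 2 * (if 2 \<in> {j} \<or> 3 \<in> {j} then 1 else 0)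
      \<le> (d - 1) div 2 * 2 + (d - 1) mod 2"
    using j by auto
  moreover have "(d - 1) div 2 * 2 + (d - 1) mod 2 < d"
    using assms(1) div_mult_mod_eq[of "d - 1" 2] by linarith
  ultimately show "lookup \<mu> j < d"
    using assms(2) by (fastforce simp: degree_in_le_def partial_deg_def)
qed

theorem not_mult_L_surjective:
  assumes "2 \<le> d"
  shows "\<not> mult_L_surjective (the_ideal d :: 'k::field_char_0 poly5 set) ((5 * d - 5) div 2 - 1)"
proof (rule not_mult_L_surjective_by_apolarity)
  show "sum_partials (inverse_system_witness d :: 'k poly5) = 0" by (rule sum_partials_inverse_system_witness)
  show "inverse_system_witness d \<noteq> (0 :: 'k poly5)" by (rule inverse_system_witness_nonzero)
  have "Suc ((5 * d - 5) div 2 - 1) = (5 * d - 5) div 2" using assms by simp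
  then show "homogeneous (inverse_system_witness d :: 'k poly5) (Suc ((5 * d - 5) div 2 - 1))"
    using homogeneous_inverse_system_witness[of d] assms by simp
  show "\<forall>h\<in>the_ideal d :: 'k poly5 set. keys h \<inter> keys (inverse_system_witness d :: 'k poly5) = {}"
  proof (intro ballI equals0I)
    fix h :: "'k poly5" and \<mu>
    assume "h \<in> the_ideal d" and "\<mu> \<in> keys h \<inter> keys (inverse_system_witness d :: 'k poly5)"
    then show False
      using inverse_system_witness_keys_not_in_ideal[of d \<mu>] assms by (auto simp: in_the_ideal_iff)
  qed
qed

section \<open>Multiplication by the linear form is not injective\<close>

lemma homogeneous_2x3_nontrivial_solution:
  fixes a1 a2 a3 b1 b2 b3 :: "'k::field"
  obtains x1 x2 x3 where "x1 \<noteq> 0 \<or> x2 \<noteq> 0 \<or> x3 \<noteq> 0"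
    and "a1 * x1 + a2 * x2 + a3 * x3 = 0" and "b1 * x1 + b2 * x2 + b3 * x3 = 0"
proof (cases "a2 * b3 - a3 * b2 = 0 \<and> a3 * b1 - a1 * b3 = 0 \<and> a1 * b2 - a2 * b1 = 0")
  \<comment> \<open>The cross product of the two coefficient rows solves both equations; if it vanishes,
    the rows are parallel and a solution of the first nonzero row solves both.\<close>
  case False
  then show ?thesis
    by (intro that[of "a2 * b3 - a3 * b2" "a3 * b1 - a1 * b3" "a1 * b2 - a2 * b1"])
      (auto simp: algebra_simps)
next
  case parallel: True
  consider "a1 \<noteq> 0 \<or> a2 \<noteq> 0" | "a1 = 0" "a2 = 0" "a3 \<noteq> 0"
    | "a1 = 0" "a2 = 0" "a3 = 0" "b1 \<noteq> 0 \<or> b2 \<noteq> 0"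
    | "a1 = 0" "a2 = 0" "a3 = 0" "b1 = 0" "b2 = 0"
    by blast
  then show ?thesis
  proof cases
    case 1
    then show ?thesis using parallel by (intro that[of a2 "- a1" 0]) (auto simp: algebra_simps)
  next
    case 2
    then show ?thesis using parallel by (intro that[of a3 0 "- a1"]) (auto simp: algebra_simps)
  next
    case 3
    then show ?thesis by (intro that[of b2 "- b1" 0]) (auto simp: algebra_simps)
  next
    case 4
    then show ?thesis by (intro that[of 1 0 0]) auto
  qed
qed

lemma lookup_binomial_power:
  assumes "a \<noteq> b" and "k \<le> m"
  shows "lookup ((var a + var b :: 'k::comm_ring_1 poly5) ^ m) (single a k + single b (m - k))
    = of_nat (m choose k)"
proof -
  have "(var a + var b :: 'k poly5) ^ m = (\<Sum>i\<le>m. of_nat (m choose i) * var a ^ i * var b ^ (m - i))"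
    by (rule binomial_ring)
  also have "\<dots> = (\<Sum>i\<le>m. single (single a i + single b (m - i)) (of_nat (m choose i)))"
    by (rule sum.cong) (simp_all add: var_power mult_single flip: single_of_nat)
  finally have expand: "(var a + var b :: 'k poly5) ^ m
      = (\<Sum>i\<le>m. single (single a i + single b (m - i)) (of_nat (m choose i)))" .
  have "single a i + single b (m - i) = single a k + single b (m - k) \<longleftrightarrow> i = k"
    if "i \<le> m" for i
  proof
    assume "single a i + single b (m - i) = single a k + single b (m - k)"
    then have "lookup (single a i + single b (m - i)) a = lookup (single a k + single b (m - k)) a"
      by (rule arg_cong)
    then show "i = k" using assms(1) by (simp add: lookup_add lookup_single)
  qed simp
  then show ?thesis
    using assms(2) by (simp add: expand lookup_sum lookup_single when_def)
qed

definition lin_form_012 :: "'k::comm_ring_1 poly5" where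
  "lin_form_012 = var 0 + var 1 + var 2"

definition lin_form_34 :: "'k::comm_ring_1 poly5" where
  "lin_form_34 = var 3 + var 4"

lemma lin_form_split: "lin_form = lin_form_012 + lin_form_34"
  by (simp only: lin_form_def lin_form_012_def lin_form_34_def sum_UNIV_5 add.assoc)

lemma homogeneous_lin_form_012: "homogeneous_in UNIV lin_form_012 1"
  unfolding lin_form_012_def by (intro homogeneous_in_add homogeneous_in_var_mem) simp_all

lemma homogeneous_lin_form_34: "homogeneous_in UNIV lin_form_34 1"
  unfolding lin_form_34_def by (intro homogeneous_in_add homogeneous_in_var_mem) simp_all

lemma homogeneous_in_34_lin_form_012: "homogeneous_in {3, 4} lin_form_012 0"
  unfolding lin_form_012_def using distinct_5
  by (intro homogeneous_in_add homogeneous_in_var_not_mem) simp_all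

lemma homogeneous_in_34_lin_form_34: "homogeneous_in {3, 4} lin_form_34 1"
  unfolding lin_form_34_def by (intro homogeneous_in_add homogeneous_in_var_mem) simp_all

lemma lin_form_34_power_mult_in_ideal:
  "lin_form_34 ^ (2 * d - 1) * (q :: 'k::comm_ring_1 poly5) \<in> the_ideal d"
  unfolding in_the_ideal_iff
proof
  let ?y = "lin_form_34 :: 'k poly5"
  fix \<mu> assume "\<mu> \<in> keys (?y ^ (2 * d - 1) * q)"
  then obtain \<alpha> \<beta> where \<alpha>: "\<alpha> \<in> keys (?y ^ (2 * d - 1))" and "\<mu> = \<alpha> + \<beta>"
    using keys_mult[of "?y ^ (2 * d - 1)" q] by blast
  have "homogeneous_in {3, 4} (?y ^ (2 * d - 1)) ((2 * d - 1) * 1)"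
    by (intro homogeneous_in_power homogeneous_in_34_lin_form_34)
  then have "lookup \<alpha> 3 + lookup \<alpha> 4 = 2 * d - 1"
    using \<alpha> distinct_5 by (simp add: homogeneous_in_def partial_deg_pair)
  then have "d \<le> lookup \<alpha> 3 \<or> d \<le> lookup \<alpha> 4"
    by arith
  then have "monomial_in_ideal d \<alpha>"
    unfolding monomial_in_ideal_def by blast
  then show "monomial_in_ideal d \<mu>"
    unfolding \<open>\<mu> = \<alpha> + \<beta>\<close> by (rule monomial_in_ideal_add_left)
qed

definition kernel_cofactor :: "nat \<Rightarrow> 'k::comm_ring_1 poly5" where
  "kernel_cofactor n = (\<Sum>j<n. (- lin_form_012) ^ (n - Suc j) * lin_form_34 ^ j)"

lemma lin_form_mult_kernel_cofactor:
  assumes "odd n"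
  shows "lin_form * kernel_cofactor n = lin_form_34 ^ n + (lin_form_012 :: 'k::comm_ring_1 poly5) ^ n"
proof -
  have "lin_form * kernel_cofactor n = lin_form_34 ^ n - (- lin_form_012 :: 'k poly5) ^ n"
    unfolding power_diff_sumr2 kernel_cofactor_def lin_form_split by (simp add: add.commute)
  also have "\<dots> = lin_form_34 ^ n + lin_form_012 ^ n"
    using assms by simp
  finally show ?thesis .
qed

lemma homogeneous_kernel_cofactor: "homogeneous_in UNIV (kernel_cofactor n) (n - 1)"
  unfolding kernel_cofactor_def
proof (rule homogeneous_in_sum)
  fix j assume "j \<in> {..<n}"
  then have "(n - Suc j) * 1 + j * 1 = n - 1" by simp
  moreover have "homogeneous_in UNIV ((- lin_form_012) ^ (n - Suc j) * lin_form_34 ^ j) ((n - Suc j) * 1 + j * 1)"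
    by (intro homogeneous_in_mult homogeneous_in_power homogeneous_in_uminus homogeneous_lin_form_012
        homogeneous_lin_form_34)
  ultimately show "homogeneous_in UNIV ((- lin_form_012) ^ (n - Suc j) * lin_form_34 ^ j) (n - 1)"
    by simp
qed

lemma lookup_kernel_cofactor:
  assumes "1 \<le> d"
  shows "lookup (kernel_cofactor (2 * d - 1) :: 'k::comm_ring_1 poly5) (single 3 (d - 1) + single 4 (d - 1))
    = of_nat ((2 * d - 2) choose (d - 1))"
proof -
  let ?\<kappa> = "single 3 (d - 1) + single 4 (d - 1) :: 5 \<Rightarrow>\<^sub>0 nat"
  let ?term = "\<lambda>j. (- lin_form_012) ^ (2 * d - 1 - Suc j) * lin_form_34 ^ j :: 'k poly5"
  have "lookup (?term j) ?\<kappa> = 0" if "j < 2 * d - 1" "j \<noteq> 2 * d - 2" for j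
  proof -
    have "homogeneous_in {3, 4} (?term j) ((2 * d - 1 - Suc j) * 0 + j * 1)"
      by (intro homogeneous_in_mult homogeneous_in_power homogeneous_in_uminus
          homogeneous_in_34_lin_form_012 homogeneous_in_34_lin_form_34)
    moreover have "partial_deg {3, 4} ?\<kappa> = 2 * d - 2"
      using assms distinct_5 by (simp add: partial_deg_pair lookup_add lookup_single)
    ultimately have "?\<kappa> \<notin> keys (?term j)"
      using that by (auto simp: homogeneous_in_def)
    then show ?thesis by (simp add: in_keys_iff)
  qed
  then have "lookup (kernel_cofactor (2 * d - 1) :: 'k poly5) ?\<kappa> = lookup (?term (2 * d - 2)) ?\<kappa>"
    unfolding kernel_cofactor_def lookup_sum using assms
    by (subst sum.remove[of _ "2 * d - 2"]) (auto intro!: sum.neutral)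
  also have "\<dots> = lookup ((var 3 + var 4) ^ (2 * d - 2)) (single 3 (d - 1) + single 4 (2 * d - 2 - (d - 1)))"
    using assms by (simp add: lin_form_34_def Suc_diff_Suc)
  also have "\<dots> = of_nat ((2 * d - 2) choose (d - 1))"
    using distinct_5 by (intro lookup_binomial_power) auto
  finally show ?thesis .
qed

lemma div_two_pred_bounds:
  assumes "1 \<le> (d::nat)"
  shows "(d + 1) div 2 = (d - 1) div 2 + 1" "(d - 1) div 2 \<le> d div 2" "d div 2 \<le> (d - 1) div 2 + 1"
proof -
  obtain m where d: "d = Suc m" using assms by (cases d) auto
  show "(d + 1) div 2 = (d - 1) div 2 + 1" by (simp add: d)
  show "(d - 1) div 2 \<le> d div 2" by (simp add: d div_le_mono)
  show "d div 2 \<le> (d - 1) div 2 + 1" by (simp add: d)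
qed

lemma monomial_012_eq:
  fixes \<mu> :: "5 \<Rightarrow>\<^sub>0 nat"
  assumes "lookup \<mu> 3 = 0" and "lookup \<mu> 4 = 0"
  shows "\<mu> = single 0 (lookup \<mu> 0) + single 1 (lookup \<mu> 1) + single 2 (lookup \<mu> 2)"
proof (rule poly_mapping_eqI)
  fix j :: 5
  show "lookup \<mu> j = lookup (single 0 (lookup \<mu> 0) + single 1 (lookup \<mu> 1) + single 2 (lookup \<mu> 2)) j"
    using exhaust_5[of j] assms distinct_5 by (auto simp: lookup_add lookup_single)
qed

lemma standard_monomial_012_cases:
  assumes "1 \<le> d" and "lookup \<mu> 3 = 0" and "lookup \<mu> 4 = 0"
    and "mdeg \<mu> = 2 * (d - 1) + (d - 1) div 2" and "\<not> monomial_in_ideal d \<mu>"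
  shows "\<mu> = single 0 ((d - 1) div 2) + single 1 (d - 1) + single 2 (d - 1)
       \<or> \<mu> = single 0 (d - 1) + single 1 ((d - 1) div 2) + single 2 (d - 1)"
proof -
  have below: "lookup \<mu> j < d" for j
    using assms(5) by (auto simp: monomial_in_ideal_def not_le)
  have not_mixed: "\<not> ((d + 1) div 2 \<le> lookup \<mu> 0 \<and> d div 2 \<le> lookup \<mu> 1)"
    using assms(5) by (auto simp: monomial_in_ideal_def)
  have sum: "lookup \<mu> 0 + lookup \<mu> 1 + lookup \<mu> 2 = 2 * (d - 1) + (d - 1) div 2"
    using assms(2-4) by (simp add: mdeg_def sum_UNIV_5)
  have "lookup \<mu> 0 = (d - 1) div 2 \<and> lookup \<mu> 1 = d - 1 \<and> lookup \<mu> 2 = d - 1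
      \<or> lookup \<mu> 0 = d - 1 \<and> lookup \<mu> 1 = (d - 1) div 2 \<and> lookup \<mu> 2 = d - 1"
    using below[of 0] below[of 1] below[of 2] not_mixed sum div_two_pred_bounds[OF assms(1)] by linarith
  then show ?thesis
    using monomial_012_eq[OF assms(2,3)] by auto
qed

definition power_sum_012 :: "(5 \<Rightarrow> 'k::comm_ring_1) \<Rightarrow> nat \<Rightarrow> 'k poly5" where
  "power_sum_012 c h = (\<Sum>i\<in>{0, 1, 2}. single (single i h) (c i))"

lemma homogeneous_power_sum_012: "homogeneous_in UNIV (power_sum_012 c h) h"
  unfolding power_sum_012_def
proof (rule homogeneous_in_sum)
  fix i :: 5
  show "homogeneous_in UNIV (single (single i h) (c i)) h"
    using homogeneous_in_single[of UNIV "single i h" "c i"] by simp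
qed

lemma homogeneous_in_34_power_sum_012: "homogeneous_in {3, 4} (power_sum_012 c h) 0"
  unfolding power_sum_012_def
proof (rule homogeneous_in_sum)
  fix i :: 5 assume "i \<in> {0, 1, 2}"
  then have "partial_deg {3, 4} (single i h) = 0"
    using distinct_5 by auto
  then show "homogeneous_in {3, 4} (single (single i h) (c i)) 0"
    using homogeneous_in_single[of "{3, 4}" "single i h" "c i"] by simp
qed

lemma lookup_mult_power_sum_012:
  "lookup (p * power_sum_012 c h) \<mu>
    = lookup (p * single (single 0 h) 1) \<mu> * c 0 + lookup (p * single (single 1 h) 1) \<mu> * c 1
      + lookup (p * single (single 2 h) 1) \<mu> * c 2"
  unfolding power_sum_012_def sum_012 distrib_left lookup_add
  by (simp only: lookup_mult_single_scale[of p _ "c 0"] lookup_mult_single_scale[of p _ "c 1"]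
      lookup_mult_single_scale[of p _ "c 2"])

lemma standard_keys_lin_form_012_power_mult:
  assumes "3 \<le> d"
    and \<mu>: "\<mu> \<in> keys (lin_form_012 ^ (2 * d - 1) * power_sum_012 c ((d - 1) div 2 - 1) :: 'k::comm_ring_1 poly5)"
    and "\<not> monomial_in_ideal d \<mu>"
  shows "\<mu> = single 0 ((d - 1) div 2) + single 1 (d - 1) + single 2 (d - 1)
       \<or> \<mu> = single 0 (d - 1) + single 1 ((d - 1) div 2) + single 2 (d - 1)"
proof (rule standard_monomial_012_cases)
  let ?p = "lin_form_012 ^ (2 * d - 1) * power_sum_012 c ((d - 1) div 2 - 1) :: 'k poly5"
  have "homogeneous_in {3, 4} ?p ((2 * d - 1) * 0 + 0)"
    by (intro homogeneous_in_mult homogeneous_in_power homogeneous_in_34_lin_form_012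
        homogeneous_in_34_power_sum_012)
  then show "lookup \<mu> 3 = 0" "lookup \<mu> 4 = 0"
    using \<mu> distinct_5 by (auto simp: homogeneous_in_def partial_deg_pair)
  have "homogeneous_in UNIV ?p ((2 * d - 1) * 1 + ((d - 1) div 2 - 1))"
    by (intro homogeneous_in_mult homogeneous_in_power homogeneous_lin_form_012
        homogeneous_power_sum_012)
  then show "mdeg \<mu> = 2 * (d - 1) + (d - 1) div 2"
    using \<mu> assms(1) by (auto simp: homogeneous_in_def mdeg_eq_partial_deg)
qed (use assms in simp_all)

lemma exists_power_sum_012_in_ideal:
  assumes "3 \<le> d"
  obtains c :: "5 \<Rightarrow> 'k::field" where "\<exists>i\<in>{0, 1, 2}. c i \<noteq> 0"
    and "lin_form_012 ^ (2 * d - 1) * power_sum_012 c ((d - 1) div 2 - 1) \<in> the_ideal d"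
proof -
  define h where "h = (d - 1) div 2 - 1"
  define s where "s = (lin_form_012 :: 'k poly5) ^ (2 * d - 1)"
  define \<beta>1 :: "5 \<Rightarrow>\<^sub>0 nat" where "\<beta>1 = single 0 ((d - 1) div 2) + single 1 (d - 1) + single 2 (d - 1)"
  define \<beta>2 :: "5 \<Rightarrow>\<^sub>0 nat" where "\<beta>2 = single 0 (d - 1) + single 1 ((d - 1) div 2) + single 2 (d - 1)"
  define r where "r \<beta> i = lookup (s * single (single i h) 1) \<beta>" for \<beta> i
  obtain x0 x1 x2 where nontrivial: "x0 \<noteq> 0 \<or> x1 \<noteq> 0 \<or> x2 \<noteq> 0"
    and eq1: "r \<beta>1 0 * x0 + r \<beta>1 1 * x1 + r \<beta>1 2 * x2 = 0"
    and eq2: "r \<beta>2 0 * x0 + r \<beta>2 1 * x1 + r \<beta>2 2 * x2 = 0"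
    by (rule homogeneous_2x3_nontrivial_solution)
  define c :: "5 \<Rightarrow> 'k" where "c i = (if i = 0 then x0 else if i = 1 then x1 else x2)" for i
  have c: "c 0 = x0" "c 1 = x1" "c 2 = x2"
    using distinct_5 by (auto simp: c_def)
  have coeff: "lookup (s * power_sum_012 c h) \<beta> = r \<beta> 0 * x0 + r \<beta> 1 * x1 + r \<beta> 2 * x2" for \<beta>
    by (simp only: lookup_mult_power_sum_012 r_def c)
  have "monomial_in_ideal d \<mu>" if \<mu>: "\<mu> \<in> keys (s * power_sum_012 c h)" for \<mu>
  proof (rule ccontr)
    assume "\<not> monomial_in_ideal d \<mu>"
    then have "\<mu> = \<beta>1 \<or> \<mu> = \<beta>2"
      using standard_keys_lin_form_012_power_mult[OF assms] \<mu> unfolding s_def h_def \<beta>1_def \<beta>2_def by blast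
    then have "lookup (s * power_sum_012 c h) \<mu> = 0"
      using coeff eq1 eq2 by auto
    with \<mu> show False by (simp add: in_keys_iff)
  qed
  then show ?thesis
    using that[of c] nontrivial c unfolding in_the_ideal_iff s_def h_def by auto
qed

definition kernel_witness :: "nat \<Rightarrow> (5 \<Rightarrow> 'k) \<Rightarrow> 'k::comm_ring_1 poly5" where
  "kernel_witness d c = kernel_cofactor (2 * d - 1) * power_sum_012 c ((d - 1) div 2 - 1)"

lemma lookup_kernel_witness:
  assumes "5 \<le> d" and i: "i \<in> {0, 1, 2}"
  shows "lookup (kernel_witness d c :: 'k::comm_ring_1 poly5)
      (single 3 (d - 1) + single 4 (d - 1) + single i ((d - 1) div 2 - 1))
    = of_nat ((2 * d - 2) choose (d - 1)) * c i"
proof -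
  define h where "h = (d - 1) div 2 - 1"
  define \<kappa> :: "5 \<Rightarrow>\<^sub>0 nat" where "\<kappa> = single 3 (d - 1) + single 4 (d - 1)"
  have "lookup (kernel_cofactor (2 * d - 1) * single (single k h) 1) (\<kappa> + single i h)
      = (if k = i then of_nat ((2 * d - 2) choose (d - 1)) else (0 :: 'k))" if k: "k \<in> {0, 1, 2}" for k
  proof (cases "k = i")
    case True
    then show ?thesis
      using lookup_kernel_cofactor[of d] assms(1)
      by (simp add: lookup_mult_single_add \<kappa>_def)
  next
    case False
    have "lookup (\<kappa> + single i h) k = 0"
      using False i k distinct_5 by (auto simp: \<kappa>_def lookup_add lookup_single)
    moreover have "1 \<le> h"
      using assms(1) by (simp add: h_def)
    ultimately have "\<kappa> + single i h \<noteq> \<gamma> + single k h" for \<gamma>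
      by (auto dest!: arg_cong[where f = "\<lambda>\<mu>. lookup \<mu> k"] simp: lookup_add)
    then show ?thesis
      using False by (simp add: lookup_mult_single_eq_0)
  qed
  then show ?thesis
    using i distinct_5 unfolding kernel_witness_def lookup_mult_power_sum_012 h_def[symmetric] \<kappa>_def[symmetric]
    by auto
qed

lemma homogeneous_kernel_witness:
  assumes "3 \<le> d"
  shows "homogeneous (kernel_witness d c) ((5 * d - 5) div 2 - 1)"
proof -
  have "homogeneous_in UNIV (kernel_witness d c) ((2 * d - 1 - 1) + ((d - 1) div 2 - 1))"
    unfolding kernel_witness_def
    by (intro homogeneous_in_mult homogeneous_kernel_cofactor homogeneous_power_sum_012)
  moreover have "2 \<le> d - 1"
    using assms by simp
  then have "1 \<le> (d - 1) div 2"
    using div_le_mono[of 2 "d - 1" 2] by simp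
  then have "(2 * d - 1 - 1) + ((d - 1) div 2 - 1) = (5 * d - 5) div 2 - 1"
    using five_pred_div_two_eq[of d] by linarith
  ultimately show ?thesis
    by (simp add: homogeneous_iff_homogeneous_in)
qed

lemma lin_form_mult_kernel_witness_in_ideal:
  assumes "1 \<le> d"
    and "lin_form_012 ^ (2 * d - 1) * power_sum_012 c ((d - 1) div 2 - 1) \<in> the_ideal d"
  shows "lin_form * kernel_witness d c \<in> (the_ideal d :: 'k::comm_ring_1 poly5 set)"
proof -
  let ?w = "power_sum_012 c ((d - 1) div 2 - 1) :: 'k poly5"
  have odd: "odd (2 * d - 1)"
    using assms(1) by (simp add: odd_pos)
  have "lin_form * kernel_witness d c = lin_form_34 ^ (2 * d - 1) * ?w + lin_form_012 ^ (2 * d - 1) * ?w"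
    unfolding kernel_witness_def
    by (simp only: mult.assoc[symmetric] lin_form_mult_kernel_cofactor[OF odd] distrib_right)
  then show ?thesis
    using the_ideal_add lin_form_34_power_mult_in_ideal assms(2) by metis
qed

lemma kernel_witness_not_in_ideal:
  fixes c :: "5 \<Rightarrow> 'k::field_char_0"
  assumes "5 \<le> d" and i: "i \<in> {0, 1, 2}" "c i \<noteq> 0"
  shows "kernel_witness d c \<notin> the_ideal d"
proof -
  define h where "h = (d - 1) div 2 - 1"
  define \<mu> :: "5 \<Rightarrow>\<^sub>0 nat" where "\<mu> = single 3 (d - 1) + single 4 (d - 1) + single i h"
  have "lookup (kernel_witness d c) \<mu> = of_nat ((2 * d - 2) choose (d - 1)) * c i"
    unfolding \<mu>_def h_def using assms(1) i(1) by (rule lookup_kernel_witness)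
  then have "\<mu> \<in> keys (kernel_witness d c)"
    using i(2) by (simp add: in_keys_iff)
  moreover have "\<not> monomial_in_ideal d \<mu>"
  proof (rule not_monomial_in_ideal)
    have "h < d" using assms by (simp add: h_def)
    have lookup_\<mu>: "lookup \<mu> j = (if j = 3 then d - 1 else 0) + (if j = 4 then d - 1 else 0) + (if j = i then h else 0)" for j
      using distinct_5 by (auto simp: \<mu>_def lookup_add lookup_single)
    show "lookup \<mu> 0 + lookup \<mu> 1 < d"
      using i(1) distinct_5 \<open>h < d\<close> by (auto simp: lookup_\<mu>)
    show "lookup \<mu> j < d" if "j \<in> {2, 3, 4}" for j
      using i(1) that distinct_5 \<open>h < d\<close> assms by (auto simp: lookup_\<mu>)
  qed
  ultimately show ?thesis
    by (auto simp: in_the_ideal_iff)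
qed

theorem not_mult_L_injective:
  assumes "5 \<le> d"
  shows "\<not> mult_L_injective (the_ideal d :: 'k::field_char_0 poly5 set) ((5 * d - 5) div 2 - 1)"
proof
  assume injective: "mult_L_injective (the_ideal d :: 'k poly5 set) ((5 * d - 5) div 2 - 1)"
  obtain c :: "5 \<Rightarrow> 'k" where "\<exists>i\<in>{0, 1, 2}. c i \<noteq> 0"
    and annihilated: "lin_form_012 ^ (2 * d - 1) * power_sum_012 c ((d - 1) div 2 - 1) \<in> the_ideal d"
    using exists_power_sum_012_in_ideal[of d] assms by auto
  then obtain i where i: "i \<in> {0, 1, 2}" "c i \<noteq> 0" by blast
  have "lin_form * kernel_witness d c \<in> the_ideal d"
    using assms annihilated by (intro lin_form_mult_kernel_witness_in_ideal) simp_all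
  moreover have "homogeneous (kernel_witness d c) ((5 * d - 5) div 2 - 1)"
    using assms by (intro homogeneous_kernel_witness) simp
  ultimately have "kernel_witness d c \<in> the_ideal d"
    using injective unfolding mult_L_injective_def by blast
  with kernel_witness_not_in_ideal[of d i c] assms i show False by blast
qed

theorem lemma5p8:
  fixes d :: nat
  assumes "d \<ge> 5"
  shows "fails_WLP_in_degree (the_ideal d :: 'k::field_char_0 poly5 set) ((5 * d - 5) div 2 - 1)"
  unfolding fails_WLP_in_degree_def
  using not_mult_L_injective[OF assms] not_mult_L_surjective[of d] assms by simp

end
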